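(* Let $n\ge 1$ and let $\vec a=(a_0,\dots,a_n)$ be a vector of nonnegative integers. For a vector $\vec r=(r_1,\dots,r_n)$ of nonnegative integers, set $r_0=r_{n+1}=0$ and define \[ d(\vec a,\vec r)=\sum_{i=1}^{n} r_i\,(a_i+a_{i-1}-r_{i-1}-r_i). \] Call $\vec r$ allowable if $r_i+r_{i+1}\le a_i$ for every $i=0,1,\dots,n$. Let $1\le i\le n$ and suppose that $\vec r=(r_1,\dots,r_n)$ is such that $\vec r\,'=(r_1,\dots,r_{i-1},r_i+1,r_{i+1},\dots,r_n)$ is allowable. Then \[ d(\vec a,\vec r\,')> d(\vec a,\vec r). \]
   Context: The quantity $d(\vec a,\vec r)$ is the dimension of the variety of real chain complexes $0\leftarrow A_0\xleftarrow{d_1}A_1\leftarrow\cdots\xleftarrow{d_n}A_n\leftarrow 0$ with $\dim A_i=a_i$ and $\operatorname{rank} d_i=r_i$; allowable vectors $\vec r$ are exactly the rank vectors for which such a complex exists. *)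

theory Defs
  imports Main
begin

text \<open>Vectors a = (a_0,...,a_n) are functions nat => nat, only values at 0..n matter.
  Vectors r = (r_1,...,r_n) are functions nat => nat, only values at 1..n matter;
  the convention r_0 = r_{n+1} = 0 is implemented by ext_r.\<close>

definition ext_r :: "nat \<Rightarrow> (nat \<Rightarrow> nat) \<Rightarrow> nat \<Rightarrow> nat" where
  "ext_r n r i = (if 1 \<le> i \<and> i \<le> n then r i else 0)"

definition dim_d :: "nat \<Rightarrow> (nat \<Rightarrow> nat) \<Rightarrow> (nat \<Rightarrow> nat) \<Rightarrow> int" where
  "dim_d n a r = (\<Sum>i=1..n. int (ext_r n r i) *
      (int (a i) + int (a (i - 1)) - int (ext_r n r (i - 1)) - int (ext_r n r i)))"

definition allowable :: "nat \<Rightarrow> (nat \<Rightarrow> nat) \<Rightarrow> (nat \<Rightarrow> nat) \<Rightarrow> bool" where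
  "allowable n a r = (\<forall>i\<in>{0..n}. ext_r n r i + ext_r n r (i + 1) \<le> a i)"

end

theory Submission
  imports Defs
begin

text \<open>Raising \<open>r\<^sub>i\<close> by one changes only two summands of \<open>d\<close>: the \<open>i\<close>-th one grows by
  \<open>a\<^sub>i + a\<^sub>i\<^sub>-\<^sub>1 - r\<^sub>i\<^sub>-\<^sub>1 - 2 r\<^sub>i - 1\<close> and the \<open>(i+1)\<close>-th one shrinks by \<open>r\<^sub>i\<^sub>+\<^sub>1\<close>.
  Adding the allowability inequalities of \<open>r'\<close> at \<open>i - 1\<close> and at \<open>i\<close>,
  \<open>r\<^sub>i\<^sub>-\<^sub>1 + r\<^sub>i + 1 \<le> a\<^sub>i\<^sub>-\<^sub>1\<close> and \<open>r\<^sub>i + 1 + r\<^sub>i\<^sub>+\<^sub>1 \<le> a\<^sub>i\<close>, shows that the net change is at least 1.\<close>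

definition dim_term :: "(nat \<Rightarrow> nat) \<Rightarrow> (nat \<Rightarrow> nat) \<Rightarrow> nat \<Rightarrow> int" where
  "dim_term a R j = int (R j) * (int (a j) + int (a (j - 1)) - int (R (j - 1)) - int (R j))"

lemma dim_d_eq_sum_dim_term: "dim_d n a r = (\<Sum>j=1..n. dim_term a (ext_r n r) j)"
  unfolding dim_d_def dim_term_def ..

lemma ext_r_fun_upd:
  assumes "1 \<le> i" and "i \<le> n"
  shows "ext_r n (r(i := x)) = (ext_r n r)(i := x)"
  using assms by (auto simp: ext_r_def)

lemma ext_r_beyond: "n < j \<Longrightarrow> ext_r n r j = 0"
  by (simp add: ext_r_def)

lemma allowableD:
  assumes "allowable n a r" and "j \<le> n"
  shows "ext_r n r j + ext_r n r (Suc j) \<le> a j"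
  using assms by (simp add: allowable_def)

lemma sum_dim_term_increment:
  fixes R :: "nat \<Rightarrow> nat"
  assumes "1 \<le> i" and "i \<le> n" and "R (Suc n) = 0"
  shows "(\<Sum>j=1..n. dim_term a (R(i := R i + 1)) j) - (\<Sum>j=1..n. dim_term a R j)
    = int (a i) + int (a (i - 1)) - int (R (i - 1)) - 2 * int (R i) - 1 - int (R (Suc i))"
proof -
  let ?A = "int (a i) + int (a (i - 1)) - int (R (i - 1)) - 2 * int (R i) - 1"
  let ?B = "- int (R (Suc i))"
  let ?R' = "R(i := R i + 1)"
  have local_change: "dim_term a ?R' j - dim_term a R j
      = (if j = i then ?A else 0) + (if j = Suc i then ?B else 0)" if "1 \<le> j" for j
  proof -
    consider "j = i" | "j = Suc i" | "j \<noteq> i" "j - 1 \<noteq> i"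
      using that by fastforce
    then show ?thesis
      by cases (use assms(1) in \<open>auto simp: dim_term_def algebra_simps\<close>)
  qed
  have "(\<Sum>j=1..n. dim_term a ?R' j) - (\<Sum>j=1..n. dim_term a R j)
      = (\<Sum>j=1..n. (if j = i then ?A else 0) + (if j = Suc i then ?B else 0))"
    unfolding sum_subtractf[symmetric] by (intro sum.cong refl local_change) simp
  also have "\<dots> = ?A + (if Suc i \<le> n then ?B else 0)"
    using assms(1,2) by (simp add: sum.distrib)
  also have "\<dots> = ?A + ?B"
    using assms(2,3) by (cases "i = n") auto
  finally show ?thesis by simp
qed

theorem lemma2p3:
  fixes n :: nat and a r :: "nat \<Rightarrow> nat" and i :: nat
  assumes "n \<ge> 1" and "1 \<le> i" and "i \<le> n"
    and "allowable n a (r(i := r i + 1))"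
  shows "dim_d n a (r(i := r i + 1)) > dim_d n a r"
proof -
  define R where "R = ext_r n r"
  have upd: "ext_r n (r(i := r i + 1)) = R(i := R i + 1)"
    using assms(2,3) by (simp add: R_def ext_r_fun_upd ext_r_def)
  have "R (i - 1) + (R i + 1) \<le> a (i - 1)"
    using allowableD[OF assms(4), of "i - 1", unfolded upd] assms(2,3) by (cases i) auto
  moreover have "R i + 1 + R (Suc i) \<le> a i"
    using allowableD[OF assms(4), of i, unfolded upd] assms(3) by simp
  moreover have "dim_d n a (r(i := r i + 1)) - dim_d n a r
      = int (a i) + int (a (i - 1)) - int (R (i - 1)) - 2 * int (R i) - 1 - int (R (Suc i))"
    unfolding dim_d_eq_sum_dim_term upd R_def[symmetric]
    using sum_dim_term_increment assms(2,3) ext_r_beyond R_def by simp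
  ultimately show ?thesis by linarith
qed

end
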